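(* Let $G=(G_1,v_1,e_1)\Delta(G_2,v_2,e_2)$ be a Hajós join of two hypergraphs $G_1$ and $G_2$, and let $k\ge2$ be an integer. Then: (a) if both $G_1$ and $G_2$ are $(k+1)$-critical, then $G$ is $(k+1)$-critical; (b) if $G$ is $(k+1)$-critical and $k\ge3$, then both $G_1$ and $G_2$ are $(k+1)$-critical.
   Context: A hypergraph is a pair $G=(V,E)$ of finite sets with $E\subseteq 2^V$ and $|e|\ge2$ for all $e\in E$. A coloring requires every edge to contain two vertices of different colors; $\chi$ is the chromatic number. $G$ is $(k+1)$-critical if $\chi(G)=k+1$ but $\chi(H)\le k$ for every proper subhypergraph $H$. Hajós join $(G_1,v_1,e_1)\Delta(G_2,v_2,e_2)$: for vertex-disjoint hypergraphs $G_1,G_2$, $e_i\in E(G_i)$, $v_i\in e_i$, delete $e_1,e_2$, identify $v_1,v_2$ into a new vertex $v^*$, and add a new edge $e^*$ equal either to $(e_1\cup e_2)\setminus\{v_1,v_2\}$ or to $((e_1\cup e_2)\setminus\{v_1,v_2\})\cup\{v^*\}$. *)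

theory Defs
  imports Main
begin

definition hypergraph :: "'a set \<Rightarrow> 'a set set \<Rightarrow> bool" where
  "hypergraph V E \<longleftrightarrow> finite V \<and> E \<subseteq> Pow V \<and> (\<forall>e\<in>E. card e \<ge> 2)"

definition colorable :: "'a set \<Rightarrow> 'a set set \<Rightarrow> nat \<Rightarrow> bool" where
  "colorable V E k \<longleftrightarrow> (\<exists>f :: 'a \<Rightarrow> nat. (\<forall>v\<in>V. f v < k) \<and>
      (\<forall>e\<in>E. \<exists>u\<in>e. \<exists>w\<in>e. f u \<noteq> f w))"

definition chi :: "'a set \<Rightarrow> 'a set set \<Rightarrow> nat" where
  "chi V E = (LEAST k. colorable V E k)"

definition subhypergraph :: "'a set \<Rightarrow> 'a set set \<Rightarrow> 'a set \<Rightarrow> 'a set set \<Rightarrow> bool" where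
  "subhypergraph V' E' V E \<longleftrightarrow> hypergraph V' E' \<and> V' \<subseteq> V \<and> E' \<subseteq> E"

definition critical :: "nat \<Rightarrow> 'a set \<Rightarrow> 'a set set \<Rightarrow> bool" where
  "critical m V E \<longleftrightarrow> hypergraph V E \<and> chi V E = m \<and>
     (\<forall>V' E'. subhypergraph V' E' V E \<and> (V', E') \<noteq> (V, E) \<longrightarrow> chi V' E' < m)"

text \<open>Hajos join. The identified vertex is vs (required to be new, i.e. outside
  (V1-{v1}) \<union> (V2-{v2})); the flag b chooses whether vs is added to the new edge.\<close>
definition hajos_merge :: "'a \<Rightarrow> 'a \<Rightarrow> 'a \<Rightarrow> 'a \<Rightarrow> 'a" where
  "hajos_merge v1 v2 vs x = (if x = v1 \<or> x = v2 then vs else x)"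

definition hajos_join ::
  "'a set \<Rightarrow> 'a set set \<Rightarrow> 'a \<Rightarrow> 'a set \<Rightarrow> 'a set \<Rightarrow> 'a set set \<Rightarrow> 'a \<Rightarrow> 'a set
   \<Rightarrow> 'a \<Rightarrow> bool \<Rightarrow> 'a set \<times> 'a set set" where
  "hajos_join V1 E1 v1 e1 V2 E2 v2 e2 vs b =
    (((V1 \<union> V2) - {v1, v2}) \<union> {vs},
     (image (hajos_merge v1 v2 vs) ` ((E1 - {e1}) \<union> (E2 - {e2})))
     \<union> {((e1 \<union> e2) - {v1, v2}) \<union> (if b then {vs} else {})})"

end

theory Submission
  imports Defs "HOL-Combinatorics.Transposition"
begin

text \<open>
  A \<open>k\<close>-coloring of the join pulls back, along the map identifying \<open>v1\<close> and \<open>v2\<close>, to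
  \<open>k\<close>-colorings of \<open>G1 - e1\<close> and \<open>G2 - e2\<close>; as the new edge is not monochromatic, \<open>e1\<close> or
  \<open>e2\<close> is not monochromatic either, so one side is \<open>k\<close>-colorable. Conversely, \<open>k\<close>-colorings
  of the two sides can be permuted to agree at \<open>v1\<close> and \<open>v2\<close> and glued; the result colors the
  new edge properly as soon as some vertex of \<open>e1 - v1\<close> and some vertex of \<open>e2 - v2\<close> get
  different colors. Together with the characterization of \<open>(k+1)\<close>-criticality as
  non-\<open>k\<close>-colorability plus \<open>k\<close>-colorability after deleting any edge plus absence of isolated
  vertices, this yields (a). For (b), a \<open>k\<close>-coloring of \<open>G1\<close> would glue with one of
  \<open>G2 - e2\<close> into a \<open>k\<close>-coloring of the join; arranging the new edge to be multicolored needs a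
  third color, hence \<open>k \<ge> 3\<close>.
\<close>

definition multicolored :: "('a \<Rightarrow> nat) \<Rightarrow> 'a set \<Rightarrow> bool" where
  "multicolored f e \<longleftrightarrow> (\<exists>u\<in>e. \<exists>w\<in>e. f u \<noteq> f w)"

definition proper_coloring :: "('a \<Rightarrow> nat) \<Rightarrow> 'a set \<Rightarrow> 'a set set \<Rightarrow> nat \<Rightarrow> bool" where
  "proper_coloring f V E k \<longleftrightarrow> (\<forall>v\<in>V. f v < k) \<and> (\<forall>e\<in>E. multicolored f e)"

lemma colorable_iff_proper_coloring: "colorable V E k \<longleftrightarrow> (\<exists>f. proper_coloring f V E k)"
  unfolding colorable_def proper_coloring_def multicolored_def by blast

lemma multicolored_cong: "multicolored f e \<Longrightarrow> (\<And>x. x \<in> e \<Longrightarrow> g x = f x) \<Longrightarrow> multicolored g e"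
  unfolding multicolored_def by metis

lemma multicolored_image: "multicolored f (m ` e) \<longleftrightarrow> multicolored (f \<circ> m) e"
  unfolding multicolored_def by auto

lemma multicolored_fun_upd: "v \<notin> e \<Longrightarrow> multicolored (f(v := c)) e \<longleftrightarrow> multicolored f e"
  unfolding multicolored_def by (metis fun_upd_other)

lemma not_multicolored_eq: "\<not> multicolored f e \<Longrightarrow> u \<in> e \<Longrightarrow> w \<in> e \<Longrightarrow> f u = f w"
  unfolding multicolored_def by blast

lemma multicolored_obtain_other_color:
  assumes "multicolored f e" "v \<in> e"
  obtains x where "x \<in> e" "x \<noteq> v" "f x \<noteq> f v"
  using assms unfolding multicolored_def by metis

lemma proper_coloring_mono:
  "proper_coloring f V E k \<Longrightarrow> V' \<subseteq> V \<Longrightarrow> E' \<subseteq> E \<Longrightarrow> k \<le> k' \<Longrightarrow> proper_coloring f V' E' k'"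
  unfolding proper_coloring_def by fastforce

lemma proper_coloring_less: "proper_coloring f V E k \<Longrightarrow> v \<in> V \<Longrightarrow> f v < k"
  unfolding proper_coloring_def by blast

lemma proper_coloring_insert_edge:
  "proper_coloring f V (E - {e}) k \<Longrightarrow> multicolored f e \<Longrightarrow> proper_coloring f V E k"
  unfolding proper_coloring_def by blast

lemma not_multicolored_deleted_edge:
  "proper_coloring f V (E - {e}) k \<Longrightarrow> \<not> colorable V E k \<Longrightarrow> \<not> multicolored f e"
  using proper_coloring_insert_edge colorable_iff_proper_coloring by blast

lemma proper_coloring_comp:
  assumes "proper_coloring f V E k" "inj \<sigma>" "\<And>c. c < k \<Longrightarrow> \<sigma> c < k"
  shows "proper_coloring (\<sigma> \<circ> f) V E k"
proof -
  have "multicolored (\<sigma> \<circ> f) e" if "multicolored f e" for e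
    using that \<open>inj \<sigma>\<close> unfolding multicolored_def by (metis comp_apply injD)
  with assms show ?thesis
    unfolding proper_coloring_def by simp
qed

lemma proper_coloring_transpose:
  "proper_coloring f V E k \<Longrightarrow> a < k \<Longrightarrow> b < k \<Longrightarrow> proper_coloring (transpose a b \<circ> f) V E k"
  by (rule proper_coloring_comp) (auto simp: inj_transpose transpose_def)

lemma hypergraph_edgeD:
  assumes "hypergraph V E" "e \<in> E"
  shows "e \<subseteq> V" "card e \<ge> 2"
  using assms unfolding hypergraph_def by auto

lemma hypergraph_restrict:
  assumes "hypergraph V E" "V' \<subseteq> V" "E' \<subseteq> E" "\<forall>e\<in>E'. e \<subseteq> V'"
  shows "hypergraph V' E'"
  unfolding hypergraph_def
proof (intro conjI)
  show "finite V'"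
    using assms(1,2) finite_subset unfolding hypergraph_def by blast
  show "E' \<subseteq> Pow V'"
    using assms(4) by blast
  show "\<forall>e\<in>E'. card e \<ge> 2"
    using assms(1,3) unfolding hypergraph_def by blast
qed

lemma ex_color_notin:
  assumes "finite A" "card A < k"
  obtains c where "c < k" "c \<notin> A"
proof -
  have "\<not> {..<k} \<subseteq> A"
  proof
    assume "{..<k} \<subseteq> A"
    then have "card {..<k} \<le> card A"
      by (rule card_mono[OF assms(1)])
    with assms(2) show False by simp
  qed
  then show thesis using that by blast
qed

lemma card_ge_2_obtain_other:
  assumes "card e \<ge> 2"
  obtains x where "x \<in> e" "x \<noteq> v"
proof -
  have "\<not> e \<subseteq> {v}"
  proof
    assume "e \<subseteq> {v}"
    then have "card e \<le> card {v}"
      by (rule card_mono[rotated]) simp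
    with assms show False by simp
  qed
  then show thesis using that by blast
qed

lemma colorable_mono:
  "colorable V E k \<Longrightarrow> V' \<subseteq> V \<Longrightarrow> E' \<subseteq> E \<Longrightarrow> k \<le> k' \<Longrightarrow> colorable V' E' k'"
  using proper_coloring_mono colorable_iff_proper_coloring by metis

lemma colorable_card: assumes "hypergraph V E" shows "colorable V E (card V)"
proof -
  have "finite V"
    using assms unfolding hypergraph_def by blast
  then obtain h where h: "bij_betw h V {0..<card V}"
    using ex_bij_betw_finite_nat by blast
  have "multicolored h e" if "e \<in> E" for e
  proof -
    from assms that have "e \<subseteq> V" "card e \<ge> 2"
      by (rule hypergraph_edgeD)+
    then obtain u where u: "u \<in> e"
      by (cases "e = {}") auto
    obtain w where w: "w \<in> e" "w \<noteq> u"
      using \<open>card e \<ge> 2\<close> by (rule card_ge_2_obtain_other)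
    have "inj_on h V"
      using h by (rule bij_betw_imp_inj_on)
    then have "h w \<noteq> h u"
      using u w \<open>e \<subseteq> V\<close> by (meson inj_onD subsetD)
    then show ?thesis
      unfolding multicolored_def using u w by blast
  qed
  moreover have "\<forall>v\<in>V. h v < card V"
    using h bij_betwE by fastforce
  ultimately show ?thesis
    unfolding colorable_iff_proper_coloring proper_coloring_def by blast
qed

lemma colorable_iff_chi_le:
  assumes "hypergraph V E" shows "colorable V E k \<longleftrightarrow> chi V E \<le> k"
proof
  show "colorable V E k \<Longrightarrow> chi V E \<le> k"
    unfolding chi_def by (rule Least_le)
  have "colorable V E (chi V E)"
    unfolding chi_def by (rule LeastI[of "colorable V E", OF colorable_card[OF assms]])
  then show "chi V E \<le> k \<Longrightarrow> colorable V E k"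
    using colorable_mono[of V E "chi V E" V E k] by blast
qed

lemma colorable_Suc_if_colorable_minus_edge:
  assumes hyp: "hypergraph V E" and "e0 \<in> E" and col: "colorable V (E - {e0}) k"
  shows "colorable V E (Suc k)"
proof -
  have "card e0 \<ge> 2"
    using hyp \<open>e0 \<in> E\<close> by (rule hypergraph_edgeD)
  then obtain u where u: "u \<in> e0"
    by (cases "e0 = {}") auto
  obtain f where f: "proper_coloring f V (E - {e0}) k"
    using col colorable_iff_proper_coloring by blast
  have "multicolored (f(u := k)) e" if e: "e \<in> E" for e
  proof (cases "u \<in> e")
    case True
    from hyp e have "e \<subseteq> V" "card e \<ge> 2"
      by (rule hypergraph_edgeD)+
    then obtain w where w: "w \<in> e" "w \<noteq> u" "w \<in> V"
      by (metis card_ge_2_obtain_other subsetD)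
    then have "(f(u := k)) w \<noteq> (f(u := k)) u"
      using f unfolding proper_coloring_def by auto
    then show ?thesis
      unfolding multicolored_def using w True by blast
  next
    case False
    with u e f have "multicolored f e"
      unfolding proper_coloring_def by blast
    with False show ?thesis
      by (simp add: multicolored_fun_upd)
  qed
  moreover have "\<forall>v\<in>V. (f(u := k)) v < Suc k"
    using f unfolding proper_coloring_def by (simp add: less_Suc_eq)
  ultimately show ?thesis
    unfolding colorable_iff_proper_coloring proper_coloring_def by blast
qed

lemma colorable_insert_uncovered:
  assumes "colorable (V - {v}) E k" "\<forall>e\<in>E. v \<notin> e" "k \<ge> 1"
  shows "colorable V E k"
proof -
  obtain f where f: "proper_coloring f (V - {v}) E k"
    using assms colorable_iff_proper_coloring by blast
  have "multicolored (f(v := 0)) e" if "e \<in> E" for e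
    using f assms that unfolding proper_coloring_def
    by (simp add: multicolored_fun_upd)
  with f assms have "proper_coloring (f(v := 0)) V E k"
    unfolding proper_coloring_def by auto
  then show ?thesis using colorable_iff_proper_coloring by blast
qed

lemma critical_subhypergraph_colorable:
  assumes "critical (k + 1) V E" "subhypergraph V' E' V E" "(V', E') \<noteq> (V, E)"
  shows "colorable V' E' k"
proof -
  have "hypergraph V' E'"
    using assms(2) unfolding subhypergraph_def by blast
  moreover have "chi V' E' < k + 1"
    using assms unfolding critical_def by blast
  ultimately show ?thesis
    by (simp add: colorable_iff_chi_le)
qed

lemma criticalD:
  assumes "k \<ge> 1" and crit: "critical (k + 1) V E"
  shows "hypergraph V E" "\<not> colorable V E k" "\<And>e. e \<in> E \<Longrightarrow> colorable V (E - {e}) k"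
    "\<And>v. v \<in> V \<Longrightarrow> \<exists>e\<in>E. v \<in> e"
proof -
  show hyp: "hypergraph V E"
    using crit unfolding critical_def by blast
  then show not_col: "\<not> colorable V E k"
    using crit unfolding critical_def by (simp add: colorable_iff_chi_le)
  show "colorable V (E - {e}) k" if "e \<in> E" for e
  proof (rule critical_subhypergraph_colorable[OF crit])
    show "subhypergraph V (E - {e}) V E"
      using hyp hypergraph_restrict[of V E V "E - {e}"] hypergraph_edgeD(1)
      unfolding subhypergraph_def by blast
    show "(V, E - {e}) \<noteq> (V, E)"
      using that by blast
  qed
  show "\<exists>e\<in>E. v \<in> e" if "v \<in> V" for v
  proof (rule ccontr)
    assume "\<not> (\<exists>e\<in>E. v \<in> e)"
    then have uncovered: "\<forall>e\<in>E. v \<notin> e"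
      by blast
    have "colorable (V - {v}) E k"
    proof (rule critical_subhypergraph_colorable[OF crit])
      show "subhypergraph (V - {v}) E V E"
        using hyp uncovered hypergraph_restrict[of V E "V - {v}" E] hypergraph_edgeD(1)
        unfolding subhypergraph_def by blast
      show "(V - {v}, E) \<noteq> (V, E)"
        using that by blast
    qed
    then have "colorable V E k"
      using uncovered \<open>k \<ge> 1\<close> by (rule colorable_insert_uncovered)
    with not_col show False ..
  qed
qed

lemma criticalI:
  assumes "k \<ge> 1" and hyp: "hypergraph V E" and not_col: "\<not> colorable V E k"
    and col_minus: "\<And>e. e \<in> E \<Longrightarrow> colorable V (E - {e}) k"
    and covered: "\<And>v. v \<in> V \<Longrightarrow> \<exists>e\<in>E. v \<in> e"
  shows "critical (k + 1) V E"
proof -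
  have "E \<noteq> {}"
  proof
    assume "E = {}"
    then have "proper_coloring (\<lambda>_. 0) V E k"
      using \<open>k \<ge> 1\<close> unfolding proper_coloring_def by auto
    then show False
      using not_col colorable_iff_proper_coloring by blast
  qed
  then obtain e0 where "e0 \<in> E" by blast
  then have "colorable V E (Suc k)"
    using colorable_Suc_if_colorable_minus_edge hyp col_minus by blast
  with not_col have chi: "chi V E = k + 1"
    unfolding colorable_iff_chi_le[OF hyp] by simp
  have "chi V' E' < k + 1" if sub: "subhypergraph V' E' V E" and ne: "(V', E') \<noteq> (V, E)" for V' E'
  proof (cases "E' = E")
    case True
    with sub ne obtain v where "v \<in> V" "v \<notin> V'"
      unfolding subhypergraph_def by auto
    moreover obtain e where "e \<in> E" "v \<in> e"
      using covered \<open>v \<in> V\<close> by blast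
    ultimately show ?thesis
      using sub True hypergraph_edgeD(1) unfolding subhypergraph_def by blast
  next
    case False
    with sub obtain e where "e \<in> E" "E' \<subseteq> E - {e}"
      unfolding subhypergraph_def by blast
    then have "colorable V' E' k"
      using colorable_mono[OF col_minus] sub unfolding subhypergraph_def by blast
    moreover have "hypergraph V' E'"
      using sub unfolding subhypergraph_def by blast
    ultimately show ?thesis
      by (simp add: colorable_iff_chi_le)
  qed
  with hyp chi show "critical (k + 1) V E"
    unfolding critical_def by blast
qed

lemma vertex_in_other_edge:
  assumes hyp: "hypergraph V E" and e: "e \<in> E" "v \<in> e" and "k \<ge> 2"
    and not_col: "\<not> colorable V E k" and col_minus: "colorable V (E - {e}) k"
  shows "\<exists>e'\<in>E - {e}. v \<in> e'"
proof (rule ccontr)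
  assume only_e: "\<not> (\<exists>e'\<in>E - {e}. v \<in> e')"
  obtain g where g: "proper_coloring g V (E - {e}) k"
    using col_minus colorable_iff_proper_coloring by blast
  have "card e \<ge> 2"
    using hyp e(1) by (rule hypergraph_edgeD)
  obtain u where u: "u \<in> e" "u \<noteq> v"
    using \<open>card e \<ge> 2\<close> by (rule card_ge_2_obtain_other)
  obtain c where c: "c < k" "c \<noteq> g u"
    using ex_color_notin[of "{g u}" k] \<open>k \<ge> 2\<close> by auto
  have "multicolored (g(v := c)) e'" if "e' \<in> E" for e'
  proof (cases "e' = e")
    case True
    have "(g(v := c)) u \<noteq> (g(v := c)) v"
      using u c by simp
    with True u e show ?thesis
      unfolding multicolored_def by blast
  next
    case False
    with that g have "multicolored g e'"
      unfolding proper_coloring_def by blast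
    moreover have "v \<notin> e'"
      using False that only_e by blast
    ultimately show ?thesis
      by (simp add: multicolored_fun_upd)
  qed
  with g c have "proper_coloring (g(v := c)) V E k"
    unfolding proper_coloring_def by simp
  with not_col show False
    using colorable_iff_proper_coloring by blast
qed

lemma hajos_merge_commute: "hajos_merge v2 v1 vs = hajos_merge v1 v2 vs"
  unfolding hajos_merge_def by auto

lemma hajos_join_commute:
  "hajos_join V2 E2 v2 e2 V1 E1 v1 e1 vs b = hajos_join V1 E1 v1 e1 V2 E2 v2 e2 vs b"
  unfolding hajos_join_def hajos_merge_commute[of v2 v1 vs]
  by (simp add: Un_commute insert_commute)

locale hajos_join_setting =
  fixes V1 :: "'a set" and E1 :: "'a set set" and v1 :: 'a and e1 :: "'a set"
    and V2 :: "'a set" and E2 :: "'a set set" and v2 :: 'a and e2 :: "'a set"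
    and vs :: 'a and b :: bool and V :: "'a set" and E :: "'a set set"
  assumes hyp1: "hypergraph V1 E1" and hyp2: "hypergraph V2 E2" and disjoint: "V1 \<inter> V2 = {}"
    and e1: "e1 \<in> E1" and v1_e1: "v1 \<in> e1" and e2: "e2 \<in> E2" and v2_e2: "v2 \<in> e2"
    and vs_new: "vs \<notin> (V1 - {v1}) \<union> (V2 - {v2})"
    and join: "(V, E) = hajos_join V1 E1 v1 e1 V2 E2 v2 e2 vs b"
begin

abbreviation merge :: "'a \<Rightarrow> 'a" where
  "merge \<equiv> hajos_merge v1 v2 vs"

abbreviation new_edge :: "'a set" where
  "new_edge \<equiv> ((e1 \<union> e2) - {v1, v2}) \<union> (if b then {vs} else {})"

lemma V_eq: "V = ((V1 \<union> V2) - {v1, v2}) \<union> {vs}"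
  using join unfolding hajos_join_def by simp

lemma E_eq: "E = (image merge ` (E1 - {e1})) \<union> (image merge ` (E2 - {e2})) \<union> {new_edge}"
  using join unfolding hajos_join_def by auto

lemma symmetric: "hajos_join_setting V2 E2 v2 e2 V1 E1 v1 e1 vs b V E"
proof
  show "(V, E) = hajos_join V2 E2 v2 e2 V1 E1 v1 e1 vs b"
    using join by (simp add: hajos_join_commute)
qed (use hyp1 hyp2 disjoint e1 v1_e1 e2 v2_e2 vs_new in auto)

lemma new_edge_commute: "((e2 \<union> e1) - {v2, v1}) \<union> (if b then {vs} else {}) = new_edge"
  by (simp add: Un_commute insert_commute)

lemma e1_subset: "e1 \<subseteq> V1"
  using hypergraph_edgeD(1)[OF hyp1 e1] .

lemma e2_subset: "e2 \<subseteq> V2"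
  using hypergraph_edgeD(1)[OF hyp2 e2] .

lemma v1_in_V1: "v1 \<in> V1"
  using e1_subset v1_e1 by blast

lemma v2_in_V2: "v2 \<in> V2"
  using e2_subset v2_e2 by blast

lemma merge_V1: "x \<in> V1 \<Longrightarrow> merge x = (if x = v1 then vs else x)"
  unfolding hajos_merge_def using disjoint v2_in_V2 by auto

lemma merge_V2: "x \<in> V2 \<Longrightarrow> merge x = (if x = v2 then vs else x)"
  unfolding hajos_merge_def using disjoint v1_in_V1 by auto

lemma merge_in_V: "x \<in> V1 \<Longrightarrow> merge x \<in> V"
  using merge_V1 V_eq disjoint v2_in_V2 by auto

lemma inj_on_merge: "inj_on merge V1"
proof
  fix x y assume "x \<in> V1" "y \<in> V1" "merge x = merge y"
  then show "x = y"
    using merge_V1 vs_new by (auto split: if_splits)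
qed

lemma image_merge_in_E: "e \<in> E1 - {e1} \<Longrightarrow> merge ` e \<in> E"
  using E_eq by blast

lemma new_edge_in_E: "new_edge \<in> E"
  using E_eq by blast

lemma E_cases:
  assumes "X \<in> E"
  obtains (left) e where "e \<in> E1 - {e1}" "X = merge ` e"
    | (right) e where "e \<in> E2 - {e2}" "X = merge ` e"
    | (new) "X = new_edge"
  using assms E_eq by blast

lemma image_merge_meets_V1:
  assumes "e \<in> E1"
  obtains x where "x \<in> merge ` e" "x \<in> V1 - {v1}"
proof -
  obtain x where x: "x \<in> e" "x \<noteq> v1"
    using hypergraph_edgeD(2)[OF hyp1 assms] by (rule card_ge_2_obtain_other)
  moreover have "x \<in> V1"
    using x hypergraph_edgeD(1)[OF hyp1 assms] by blast
  ultimately show thesis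
    using that merge_V1 by (metis DiffI imageI singletonD)
qed

lemma image_merge_neq:
  assumes "e \<in> E1" "e' \<in> E2"
  shows "merge ` e \<noteq> merge ` e'"
proof
  assume eq: "merge ` e = merge ` e'"
  obtain x where x: "x \<in> merge ` e" "x \<in> V1 - {v1}"
    using assms(1) by (rule image_merge_meets_V1)
  then obtain y where y: "y \<in> e'" "x = merge y"
    using eq by blast
  have "y \<in> V2"
    using y hypergraph_edgeD(1)[OF hyp2 assms(2)] by blast
  then have "x = vs \<or> x \<in> V2"
    using y merge_V2 by auto
  then show False
    using x vs_new disjoint by blast
qed

lemma new_edge_notin_image: "new_edge \<notin> image merge ` E1"
proof
  assume "new_edge \<in> image merge ` E1"
  then obtain e where e: "e \<in> E1" "new_edge = merge ` e"
    by blast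
  obtain y where y: "y \<in> e2" "y \<noteq> v2"
    using hypergraph_edgeD(2)[OF hyp2 e2] by (rule card_ge_2_obtain_other)
  then have "y \<in> new_edge"
    using e2_subset disjoint v1_in_V1 by auto
  then obtain x where x: "x \<in> e" "merge x = y"
    using e by auto
  moreover have "x \<in> V1"
    using x hypergraph_edgeD(1)[OF hyp1 e(1)] by blast
  ultimately show False
    using merge_V1 y vs_new e2_subset disjoint by (auto split: if_splits)
qed

lemma image_merge_edge:
  assumes "e \<in> E1"
  shows "merge ` e \<subseteq> V" "card (merge ` e) \<ge> 2"
proof -
  have "e \<subseteq> V1" "card e \<ge> 2"
    using hypergraph_edgeD[OF hyp1 assms] by auto
  moreover have "card (merge ` e) = card e"
    using inj_on_subset[OF inj_on_merge \<open>e \<subseteq> V1\<close>] by (rule card_image)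
  ultimately show "merge ` e \<subseteq> V" "card (merge ` e) \<ge> 2"
    using merge_in_V by auto
qed

lemma hypergraph_join: "hypergraph V E"
proof -
  have "X \<subseteq> V \<and> card X \<ge> 2" if "X \<in> E" for X
    using that
  proof (cases rule: E_cases)
    case (left e)
    then show ?thesis
      using image_merge_edge by simp
  next
    case (right e)
    then show ?thesis
      using hajos_join_setting.image_merge_edge[OF symmetric] by (simp add: hajos_merge_commute)
  next
    case new
    obtain x where x: "x \<in> e1" "x \<noteq> v1"
      using hypergraph_edgeD(2)[OF hyp1 e1] by (rule card_ge_2_obtain_other)
    obtain y where y: "y \<in> e2" "y \<noteq> v2"
      using hypergraph_edgeD(2)[OF hyp2 e2] by (rule card_ge_2_obtain_other)
    have "x \<in> X" "y \<in> X" "x \<noteq> y"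
      using x y new e1_subset e2_subset disjoint v1_in_V1 v2_in_V2 by auto
    moreover have "finite X"
      using new e1_subset e2_subset hyp1 hyp2 finite_subset unfolding hypergraph_def by auto
    ultimately have "card {x, y} \<le> card X"
      by (intro card_mono) auto
    with \<open>x \<noteq> y\<close> show ?thesis
      using new V_eq e1_subset e2_subset by auto
  qed
  moreover have "finite V"
    using V_eq hyp1 hyp2 unfolding hypergraph_def by simp
  ultimately show ?thesis
    unfolding hypergraph_def by blast
qed

lemma proper_coloring_pullback:
  assumes "proper_coloring h V F k" "\<forall>e\<in>F1. merge ` e \<in> F"
  shows "proper_coloring (h \<circ> merge) V1 F1 k"
  using assms merge_in_V unfolding proper_coloring_def by (simp add: multicolored_image[symmetric])

lemma proper_coloring_pullback_right:
  assumes "proper_coloring h V F k" "\<forall>e\<in>F2. merge ` e \<in> F"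
  shows "proper_coloring (h \<circ> merge) V2 F2 k"
  using hajos_join_setting.proper_coloring_pullback[OF symmetric] assms
  by (simp add: hajos_merge_commute)

lemma colors_of_monochromatic_e1:
  assumes "\<not> multicolored (h \<circ> merge) e1" "x \<in> e1 - {v1}"
  shows "h x = h vs"
proof -
  have "(h \<circ> merge) x = (h \<circ> merge) v1"
    using not_multicolored_eq[OF assms(1)] assms(2) v1_e1 by blast
  moreover have "merge x = x" "merge v1 = vs"
    using merge_V1 assms(2) e1_subset v1_in_V1 by auto
  ultimately show ?thesis
    by simp
qed

lemma multicolored_new_edge_split:
  assumes "multicolored h new_edge"
  shows "multicolored (h \<circ> merge) e1 \<or> multicolored (h \<circ> merge) e2"
proof (rule ccontr)
  assume "\<not> ?thesis"
  then have "h x = h vs" if "x \<in> new_edge" for x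
    using that colors_of_monochromatic_e1 hajos_join_setting.colors_of_monochromatic_e1[OF symmetric]
    by (cases "x = vs") (auto simp: hajos_merge_commute split: if_splits)
  with assms show False
    unfolding multicolored_def by metis
qed

definition glue :: "('a \<Rightarrow> nat) \<Rightarrow> ('a \<Rightarrow> nat) \<Rightarrow> 'a \<Rightarrow> nat" where
  "glue g1 g2 x = (if x \<in> V1 - {v1} then g1 x else if x \<in> V2 - {v2} then g2 x else g1 v1)"

lemma glue_merge1: "x \<in> V1 \<Longrightarrow> glue g1 g2 (merge x) = g1 x"
  using merge_V1 vs_new unfolding glue_def by auto

lemma glue_merge2: "x \<in> V2 \<Longrightarrow> g2 v2 = g1 v1 \<Longrightarrow> glue g1 g2 (merge x) = g2 x"
  using merge_V2 vs_new disjoint unfolding glue_def by auto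

lemma proper_coloring_glue:
  assumes g1: "proper_coloring g1 V1 F1 k" and g2: "proper_coloring g2 V2 F2 k"
    and "F1 \<subseteq> E1" "F2 \<subseteq> E2" and agree: "g2 v2 = g1 v1" and "F \<subseteq> E"
    and in_F1: "\<And>e. e \<in> E1 - {e1} \<Longrightarrow> merge ` e \<in> F \<Longrightarrow> e \<in> F1"
    and in_F2: "\<And>e. e \<in> E2 - {e2} \<Longrightarrow> merge ` e \<in> F \<Longrightarrow> e \<in> F2"
    and new_edge_split: "new_edge \<in> F \<Longrightarrow> \<exists>x\<in>e1 - {v1}. \<exists>y\<in>e2 - {v2}. g1 x \<noteq> g2 y"
  shows "proper_coloring (glue g1 g2) V F k"
proof -
  have "glue g1 g2 x < k" if "x \<in> V" for x
    using that g1 g2 v1_in_V1 V_eq unfolding proper_coloring_def glue_def by auto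
  moreover have "multicolored (glue g1 g2) X" if "X \<in> F" for X
  proof -
    from that \<open>F \<subseteq> E\<close> have "X \<in> E" by blast
    then show ?thesis
    proof (cases rule: E_cases)
      case (left e)
      with that in_F1 g1 \<open>F1 \<subseteq> E1\<close> have "multicolored g1 e" "e \<subseteq> V1"
        using hypergraph_edgeD(1)[OF hyp1] unfolding proper_coloring_def by blast+
      then have "multicolored (glue g1 g2 \<circ> merge) e"
        using glue_merge1 multicolored_cong[of g1 e] by (metis comp_apply subsetD)
      with left show ?thesis
        by (simp add: multicolored_image)
    next
      case (right e)
      with that in_F2 g2 \<open>F2 \<subseteq> E2\<close> have "multicolored g2 e" "e \<subseteq> V2"
        using hypergraph_edgeD(1)[OF hyp2] unfolding proper_coloring_def by blast+
      then have "multicolored (glue g1 g2 \<circ> merge) e"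
        using glue_merge2 agree multicolored_cong[of g2 e] by (metis comp_apply subsetD)
      with right show ?thesis
        by (simp add: multicolored_image)
    next
      case new
      with that new_edge_split obtain x y where
        x: "x \<in> e1" "x \<noteq> v1" and y: "y \<in> e2" "y \<noteq> v2" and "g1 x \<noteq> g2 y"
        by blast
      moreover have "x \<in> V1 - {v1}" "y \<in> V2 - {v2}" "y \<notin> V1"
        using x y e1_subset e2_subset disjoint by auto
      moreover have "x \<in> new_edge" "y \<in> new_edge"
        using x y e1_subset e2_subset disjoint v1_in_V1 v2_in_V2 by auto
      ultimately show ?thesis
        unfolding multicolored_def glue_def new by (metis DiffD1)
    qed
  qed
  ultimately show ?thesis
    unfolding proper_coloring_def by blast
qed

lemma colorable_join_minus_new_edge:
  assumes "colorable V1 (E1 - {e1}) k" "colorable V2 (E2 - {e2}) k"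
  shows "colorable V (E - {new_edge}) k"
proof -
  obtain g1 g2 where g1: "proper_coloring g1 V1 (E1 - {e1}) k"
    and g2: "proper_coloring g2 V2 (E2 - {e2}) k"
    using assms colorable_iff_proper_coloring by metis
  let ?g2 = "transpose (g2 v2) (g1 v1) \<circ> g2"
  have "proper_coloring ?g2 V2 (E2 - {e2}) k"
    using g2 proper_coloring_less[OF g2 v2_in_V2] proper_coloring_less[OF g1 v1_in_V1]
    by (rule proper_coloring_transpose)
  then have "proper_coloring (glue g1 ?g2) V (E - {new_edge}) k"
    by (rule proper_coloring_glue[OF g1]) auto
  then show ?thesis
    using colorable_iff_proper_coloring by blast
qed

lemma colorable_join_minus_image:
  assumes e: "e \<in> E1 - {e1}" and col1: "colorable V1 (E1 - {e}) k"
    and col2: "colorable V2 (E2 - {e2}) k" and not_col2: "\<not> colorable V2 E2 k"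
  shows "colorable V (E - {merge ` e}) k"
proof -
  obtain g1 g2 where g1: "proper_coloring g1 V1 (E1 - {e}) k"
    and g2: "proper_coloring g2 V2 (E2 - {e2}) k"
    using col1 col2 colorable_iff_proper_coloring by metis
  have "multicolored g1 e1"
    using g1 e e1 unfolding proper_coloring_def by blast
  then obtain x where x: "x \<in> e1" "x \<noteq> v1" "g1 x \<noteq> g1 v1"
    using v1_e1 by (rule multicolored_obtain_other_color)
  obtain y where y: "y \<in> e2" "y \<noteq> v2"
    using hypergraph_edgeD(2)[OF hyp2 e2] by (rule card_ge_2_obtain_other)
  txt \<open>As \<open>G2\<close> is not \<open>k\<close>-colorable, \<open>e2\<close> is monochromatic, so after aligning the color
    of \<open>v2\<close> with that of \<open>v1\<close>, \<open>y\<close> differs in color from \<open>x\<close>.\<close>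
  have "\<not> multicolored g2 e2"
    using g2 not_col2 by (rule not_multicolored_deleted_edge)
  then have "g2 y = g2 v2"
    using y(1) v2_e2 by (rule not_multicolored_eq)
  let ?g2 = "transpose (g2 v2) (g1 v1) \<circ> g2"
  have "?g2 y = g1 v1"
    using \<open>g2 y = g2 v2\<close> by simp
  have "proper_coloring ?g2 V2 (E2 - {e2}) k"
    using g2 proper_coloring_less[OF g2 v2_in_V2] proper_coloring_less[OF g1 v1_in_V1]
    by (rule proper_coloring_transpose)
  then have "proper_coloring (glue g1 ?g2) V (E - {merge ` e}) k"
  proof (rule proper_coloring_glue[OF g1])
    show "\<exists>x\<in>e1 - {v1}. \<exists>y\<in>e2 - {v2}. g1 x \<noteq> ?g2 y"
      using x y \<open>?g2 y = g1 v1\<close> by (metis DiffI singletonD)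
  qed (use e in auto)
  then show ?thesis
    using colorable_iff_proper_coloring by blast
qed

lemma colorable_join:
  assumes "k \<ge> 3" and col1: "colorable V1 E1 k" and col2: "colorable V2 (E2 - {e2}) k"
  shows "colorable V E k"
proof -
  obtain g1 g2 where g1: "proper_coloring g1 V1 E1 k"
    and g2: "proper_coloring g2 V2 (E2 - {e2}) k"
    using col1 col2 colorable_iff_proper_coloring by metis
  have "multicolored g1 e1"
    using g1 e1 unfolding proper_coloring_def by blast
  then obtain x where x: "x \<in> e1" "x \<noteq> v1" "g1 x \<noteq> g1 v1"
    using v1_e1 by (rule multicolored_obtain_other_color)
  obtain y where y: "y \<in> e2" "y \<noteq> v2"
    using hypergraph_edgeD(2)[OF hyp2 e2] by (rule card_ge_2_obtain_other)
  have g1x: "g1 x < k" and g1v1: "g1 v1 < k"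
    using x e1_subset v1_in_V1 proper_coloring_less[OF g1] by auto
  define g2' where "g2' = transpose (g2 v2) (g1 v1) \<circ> g2"
  have g2': "proper_coloring g2' V2 (E2 - {e2}) k"
    unfolding g2'_def using g2 proper_coloring_less[OF g2 v2_in_V2] g1v1
    by (rule proper_coloring_transpose)
  have "g2' v2 = g1 v1"
    unfolding g2'_def comp_def by (rule transpose_apply_first)
  txt \<open>If \<open>y\<close> happens to get the color of \<open>x\<close>, move that color to a third one, which
    exists because \<open>k \<ge> 3\<close>; this keeps the color \<open>g1 v1\<close> of \<open>v2\<close>.\<close>
  obtain g2'' where g2'': "proper_coloring g2'' V2 (E2 - {e2}) k" "g2'' v2 = g1 v1" "g2'' y \<noteq> g1 x"
  proof (cases "g2' y = g1 x")
    case True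
    have card_lt: "card {g1 x, g1 v1} < k"
      using \<open>k \<ge> 3\<close> by (cases "g1 x = g1 v1") auto
    obtain c where c: "c < k" "c \<notin> {g1 x, g1 v1}"
      by (rule ex_color_notin[of "{g1 x, g1 v1}" k]) (use card_lt in simp_all)
    show thesis
    proof (rule that)
      show "proper_coloring (transpose (g1 x) c \<circ> g2') V2 (E2 - {e2}) k"
        using g2' g1x c(1) by (rule proper_coloring_transpose)
      show "(transpose (g1 x) c \<circ> g2') v2 = g1 v1" "(transpose (g1 x) c \<circ> g2') y \<noteq> g1 x"
        using \<open>g2' v2 = g1 v1\<close> True c x(3) by (auto simp: transpose_def)
    qed
  qed (use g2' \<open>g2' v2 = g1 v1\<close> in blast)
  have "proper_coloring (glue g1 g2'') V E k"
  proof (rule proper_coloring_glue[OF g1 g2''(1) _ _ g2''(2)])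
    show "\<exists>x\<in>e1 - {v1}. \<exists>y\<in>e2 - {v2}. g1 x \<noteq> g2'' y"
      using x y g2''(3) by (metis DiffI singletonD)
  qed auto
  then show ?thesis
    using colorable_iff_proper_coloring by blast
qed

lemma not_colorable_join:
  assumes "\<not> colorable V1 E1 k" "\<not> colorable V2 E2 k"
  shows "\<not> colorable V E k"
proof
  assume "colorable V E k"
  then obtain h where h: "proper_coloring h V E k"
    using colorable_iff_proper_coloring by blast
  have "proper_coloring (h \<circ> merge) V1 (E1 - {e1}) k"
    using h by (rule proper_coloring_pullback) (use image_merge_in_E in blast)
  moreover have "proper_coloring (h \<circ> merge) V2 (E2 - {e2}) k"
    using h by (rule proper_coloring_pullback_right)
      (use hajos_join_setting.image_merge_in_E[OF symmetric] in \<open>simp add: hajos_merge_commute\<close>)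
  moreover have "multicolored (h \<circ> merge) e1 \<or> multicolored (h \<circ> merge) e2"
    using h new_edge_in_E unfolding proper_coloring_def by (simp add: multicolored_new_edge_split)
  ultimately show False
    using assms proper_coloring_insert_edge unfolding colorable_iff_proper_coloring by blast
qed

lemma colorable_left_minus_e1:
  assumes "colorable V (E - {X}) k" "X \<notin> image merge ` E1"
  shows "colorable V1 (E1 - {e1}) k"
proof -
  obtain h where "proper_coloring h V (E - {X}) k"
    using assms(1) colorable_iff_proper_coloring by blast
  then have "proper_coloring (h \<circ> merge) V1 (E1 - {e1}) k"
    by (rule proper_coloring_pullback) (use image_merge_in_E assms(2) in blast)
  then show ?thesis
    using colorable_iff_proper_coloring by blast
qed

lemma not_colorable_left:
  assumes "k \<ge> 3" "\<not> colorable V E k" "colorable V (E - {new_edge}) k"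
  shows "\<not> colorable V1 E1 k"
proof
  assume "colorable V1 E1 k"
  moreover have "colorable V2 (E2 - {e2}) k"
    using hajos_join_setting.colorable_left_minus_e1[OF symmetric] assms(3)
      hajos_join_setting.new_edge_notin_image[OF symmetric]
    by (simp add: new_edge_commute)
  ultimately show False
    using colorable_join assms by blast
qed

lemma colorable_left_minus_edge:
  assumes e: "e \<in> E1 - {e1}" and col: "colorable V (E - {merge ` e}) k"
    and not_col2: "\<not> colorable V2 E2 k"
  shows "colorable V1 (E1 - {e}) k"
proof -
  obtain h where h: "proper_coloring h V (E - {merge ` e}) k"
    using col colorable_iff_proper_coloring by blast
  have "merge ` e' \<noteq> merge ` e" if "e' \<in> E1 - {e}" for e'
    using that e inj_on_image_eq_iff[OF inj_on_merge] hypergraph_edgeD(1)[OF hyp1] by blast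
  then have "\<forall>e'\<in>E1 - {e} - {e1}. merge ` e' \<in> E - {merge ` e}"
    using image_merge_in_E by blast
  with h have left: "proper_coloring (h \<circ> merge) V1 (E1 - {e} - {e1}) k"
    by (rule proper_coloring_pullback)
  have right_images: "merge ` e' \<in> E - {merge ` e}" if "e' \<in> E2 - {e2}" for e'
  proof -
    have "hajos_merge v2 v1 vs ` e' \<in> E"
      using hajos_join_setting.image_merge_in_E[OF symmetric that] .
    moreover have "merge ` e \<noteq> merge ` e'"
      using image_merge_neq e that by blast
    ultimately show ?thesis
      by (simp add: hajos_merge_commute)
  qed
  have "proper_coloring (h \<circ> merge) V2 (E2 - {e2}) k"
    using h by (rule proper_coloring_pullback_right) (use right_images in blast)
  then have not_e2: "\<not> multicolored (h \<circ> merge) e2"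
    using not_col2 by (rule not_multicolored_deleted_edge)
  have "new_edge \<in> E - {merge ` e}"
    using new_edge_in_E new_edge_notin_image e by blast
  then have "multicolored (h \<circ> merge) e1 \<or> multicolored (h \<circ> merge) e2"
    using h unfolding proper_coloring_def by (simp add: multicolored_new_edge_split)
  with not_e2 have "multicolored (h \<circ> merge) e1"
    by simp
  with left have "proper_coloring (h \<circ> merge) V1 (E1 - {e}) k"
    by (rule proper_coloring_insert_edge)
  then show ?thesis
    using colorable_iff_proper_coloring by blast
qed

lemma join_covers_image:
  assumes cov1: "\<And>x. x \<in> V1 \<Longrightarrow> \<exists>e\<in>E1. x \<in> e" and v1_other: "\<exists>e\<in>E1 - {e1}. v1 \<in> e"
    and x: "x \<in> V1"
  shows "\<exists>X\<in>E. merge x \<in> X"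
proof -
  obtain e where e: "e \<in> E1" "x \<in> e" "e = e1 \<longrightarrow> x \<noteq> v1"
    using cov1 v1_other x by blast
  show ?thesis
  proof (cases "e = e1")
    case True
    with e have "x \<noteq> v1" "x \<in> e1"
      by blast+
    moreover have "x \<noteq> v2"
      using x disjoint v2_in_V2 by blast
    ultimately have "merge x \<in> new_edge"
      using merge_V1[OF x] by simp
    then show ?thesis
      using new_edge_in_E by (rule bexI)
  next
    case False
    then show ?thesis
      using e image_merge_in_E by blast
  qed
qed

lemma covered_left:
  assumes cov: "\<And>x. x \<in> V \<Longrightarrow> \<exists>X\<in>E. x \<in> X" and x: "x \<in> V1"
  shows "\<exists>e\<in>E1. x \<in> e"
proof (cases "x = v1")
  case True
  then show ?thesis
    using e1 v1_e1 by blast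
next
  case False
  then have "x \<in> V" "x \<noteq> vs" "x \<notin> V2"
    using V_eq x vs_new disjoint v2_in_V2 by auto
  then obtain X where X: "X \<in> E" "x \<in> X"
    using cov by blast
  from X(1) show ?thesis
  proof (cases rule: E_cases)
    case (left e)
    then obtain u where u: "u \<in> e" "x = merge u" "u \<in> V1"
      using X(2) hypergraph_edgeD(1)[OF hyp1] by blast
    then have "u = x"
      using \<open>x \<noteq> vs\<close> merge_V1 by (auto split: if_splits)
    with u(1) left(1) show ?thesis
      by blast
  next
    case (right e)
    then obtain u where "u \<in> V2" "x = merge u"
      using X(2) hypergraph_edgeD(1)[OF hyp2] by blast
    with \<open>x \<noteq> vs\<close> \<open>x \<notin> V2\<close> show ?thesis
      using merge_V2 by (auto split: if_splits)
  next
    case new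
    with X(2) \<open>x \<noteq> vs\<close> \<open>x \<notin> V2\<close> have "x \<in> e1"
      using e2_subset by (auto split: if_splits)
    then show ?thesis
      using e1 by blast
  qed
qed

lemma image_merge_V1: "merge ` V1 = insert vs (V1 - {v1})"
proof -
  have "merge ` V1 = (\<lambda>x. if x = v1 then vs else x) ` V1"
    using merge_V1 by (rule image_cong[OF refl])
  then show ?thesis
    using v1_in_V1 by auto
qed

lemma V_eq_image: "V = merge ` V1 \<union> merge ` V2"
proof -
  have "merge ` V2 = insert vs (V2 - {v2})"
    using hajos_join_setting.image_merge_V1[OF symmetric] by (simp add: hajos_merge_commute)
  then show ?thesis
    using V_eq image_merge_V1 disjoint v1_in_V1 v2_in_V2 by auto
qed

lemma covered_join:
  assumes cov1: "\<And>x. x \<in> V1 \<Longrightarrow> \<exists>e\<in>E1. x \<in> e" "\<exists>e\<in>E1 - {e1}. v1 \<in> e"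
    and cov2: "\<And>x. x \<in> V2 \<Longrightarrow> \<exists>e\<in>E2. x \<in> e" "\<exists>e\<in>E2 - {e2}. v2 \<in> e"
    and "x \<in> V"
  shows "\<exists>X\<in>E. x \<in> X"
proof -
  from \<open>x \<in> V\<close> V_eq_image consider (left) y where "y \<in> V1" "x = merge y"
    | (right) y where "y \<in> V2" "x = merge y"
    by blast
  then show ?thesis
  proof cases
    case left
    then show ?thesis
      using join_covers_image[OF cov1] by blast
  next
    case right
    then show ?thesis
      using hajos_join_setting.join_covers_image[OF symmetric cov2]
      by (simp add: hajos_merge_commute)
  qed
qed

lemma critical_join_if_critical:
  assumes "k \<ge> 2" "critical (k + 1) V1 E1" "critical (k + 1) V2 E2"
  shows "critical (k + 1) V E"
proof -
  have "k \<ge> 1"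
    using assms(1) by simp
  note crit1 = criticalD[OF this assms(2)] and crit2 = criticalD[OF this assms(3)]
  show ?thesis
  proof (rule criticalI[OF \<open>k \<ge> 1\<close> hypergraph_join])
    show "\<not> colorable V E k"
      using crit1(2) crit2(2) by (rule not_colorable_join)
    show "colorable V (E - {X}) k" if "X \<in> E" for X
      using that
    proof (cases rule: E_cases)
      case (left e)
      then show ?thesis
        using colorable_join_minus_image crit1(3) crit2(3)[OF e2] crit2(2) by blast
    next
      case (right e)
      then show ?thesis
        using hajos_join_setting.colorable_join_minus_image[OF symmetric] crit2(3) crit1(3)[OF e1] crit1(2)
        by (simp add: hajos_merge_commute)
    next
      case new
      then show ?thesis
        using colorable_join_minus_new_edge crit1(3)[OF e1] crit2(3)[OF e2] by blast
    qed
    show "\<exists>X\<in>E. x \<in> X" if "x \<in> V" for x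
    proof (rule covered_join[OF crit1(4) _ crit2(4) _ that])
      show "\<exists>e\<in>E1 - {e1}. v1 \<in> e"
        using hyp1 e1 v1_e1 \<open>k \<ge> 2\<close> crit1(2) crit1(3)[OF e1] by (rule vertex_in_other_edge)
      show "\<exists>e\<in>E2 - {e2}. v2 \<in> e"
        using hyp2 e2 v2_e2 \<open>k \<ge> 2\<close> crit2(2) crit2(3)[OF e2] by (rule vertex_in_other_edge)
    qed
  qed
qed

lemma critical_left_if_critical_join:
  assumes "k \<ge> 3" "critical (k + 1) V E"
  shows "critical (k + 1) V1 E1"
proof -
  have "k \<ge> 1"
    using assms(1) by simp
  note crit = criticalD[OF this assms(2)]
  have col_new: "colorable V (E - {new_edge}) k"
    using new_edge_in_E by (rule crit(3))
  have not_col2: "\<not> colorable V2 E2 k"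
    using hajos_join_setting.not_colorable_left[OF symmetric \<open>k \<ge> 3\<close> crit(2)] col_new
    by (simp add: new_edge_commute)
  show ?thesis
  proof (rule criticalI[OF \<open>k \<ge> 1\<close> hyp1])
    show "\<not> colorable V1 E1 k"
      using assms(1) crit(2) col_new by (rule not_colorable_left)
    show "colorable V1 (E1 - {e}) k" if "e \<in> E1" for e
    proof (cases "e = e1")
      case True
      then show ?thesis
        using colorable_left_minus_e1 col_new new_edge_notin_image by blast
    next
      case False
      with that have "e \<in> E1 - {e1}"
        by blast
      then show ?thesis
        using colorable_left_minus_edge crit(3)[OF image_merge_in_E] not_col2 by blast
    qed
    show "\<exists>e\<in>E1. x \<in> e" if "x \<in> V1" for x
      using crit(4) that by (rule covered_left)
  qed
qed

end

theorem theorem9: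
  fixes V1 V2 :: "'a set" and E1 E2 :: "'a set set" and v1 v2 vs :: 'a
    and e1 e2 :: "'a set" and b :: bool and k :: nat and V :: "'a set" and E :: "'a set set"
  assumes "hypergraph V1 E1" and "hypergraph V2 E2" and "V1 \<inter> V2 = {}"
    and "e1 \<in> E1" and "v1 \<in> e1" and "e2 \<in> E2" and "v2 \<in> e2"
    and "vs \<notin> (V1 - {v1}) \<union> (V2 - {v2})"
    and "(V, E) = hajos_join V1 E1 v1 e1 V2 E2 v2 e2 vs b"
    and "k \<ge> 2"
  shows "(critical (k + 1) V1 E1 \<and> critical (k + 1) V2 E2 \<longrightarrow> critical (k + 1) V E)
       \<and> (critical (k + 1) V E \<and> k \<ge> 3 \<longrightarrow> critical (k + 1) V1 E1 \<and> critical (k + 1) V2 E2)"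
proof -
  interpret hajos_join_setting V1 E1 v1 e1 V2 E2 v2 e2 vs b V E
    by (rule hajos_join_setting.intro[OF assms(1-9)])
  show ?thesis
    using critical_join_if_critical critical_left_if_critical_join
      hajos_join_setting.critical_left_if_critical_join[OF symmetric] \<open>k \<ge> 2\<close>
    by blast
qed

end
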